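(* Let $X$ be a Markov chain on a finite state space $\Omega$, let $y\in\Omega$, and let $T$ be a positive integer. Let $x\in\Omega$ be a state minimizing $\mathbb{P}_x(\tau_y\le T)$ over all starting states, where $\tau_y$ is the hitting time of $y$. Then $\mathbb{P}_x(\tau_y\le T)\le\frac{T}{\mathbb{E}_x\tau_y}$.
   Context: $\tau_y=\min\{t\ge0:X_t=y\}$; $\mathbb{P}_x,\mathbb{E}_x$ refer to the chain started at $x$. *)

theory Defs
  imports "HOL-Analysis.Analysis"
begin

definition stochastic_matrix :: "('a::finite \<Rightarrow> 'a \<Rightarrow> real) \<Rightarrow> bool" where
  "stochastic_matrix P \<longleftrightarrow> (\<forall>x z. 0 \<le> P x z) \<and> (\<forall>x. (\<Sum>z\<in>UNIV. P x z) = 1)"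

text \<open>hit_le P y n x = P_x(tau_y \<le> n), tau_y = min{t \<ge> 0 : X_t = y},
  computed by first-step analysis of the chain with transition matrix P.\<close>
fun hit_le :: "('a::finite \<Rightarrow> 'a \<Rightarrow> real) \<Rightarrow> 'a \<Rightarrow> nat \<Rightarrow> 'a \<Rightarrow> real" where
  "hit_le P y 0 x = (if x = y then 1 else 0)"
| "hit_le P y (Suc n) x = (if x = y then 1 else (\<Sum>z\<in>UNIV. P x z * hit_le P y n z))"

text \<open>E_x tau_y (possibly infinite) as the tail sum  sum_{t \<ge> 0} P_x(tau_y > t).\<close>
definition exp_hit :: "('a::finite \<Rightarrow> 'a \<Rightarrow> real) \<Rightarrow> 'a \<Rightarrow> 'a \<Rightarrow> ennreal" where
  "exp_hit P y x = (\<Sum>t. ennreal (1 - hit_le P y t x))"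

end

theory Submission
  imports Defs
begin

text \<open>Let \<open>p = P\<^sub>x(\<tau>\<^sub>y \<le> T)\<close>. By minimality of \<open>x\<close>, from every state the chain
  avoids \<open>y\<close> for \<open>T\<close> steps with probability at most \<open>1 - p\<close>; by the Markov property the
  probability of avoiding \<open>y\<close> for \<open>kT\<close> steps is at most \<open>(1 - p)\<^sup>k\<close>. Summing the tail
  probabilities in blocks of length \<open>T\<close> gives \<open>E\<^sub>x \<tau>\<^sub>y \<le> T \<Sum>\<^sub>k (1 - p)\<^sup>k = T / p\<close>.\<close>

lemma hit_le_bounds:
  assumes "stochastic_matrix P"
  shows "0 \<le> hit_le P y n z \<and> hit_le P y n z \<le> 1"
proof (induction n arbitrary: z)
  case 0
  then show ?case by simp
next
  case (Suc n)
  have nonneg: "\<And>x w. 0 \<le> P x w" and row: "(\<Sum>w\<in>UNIV. P z w) = 1"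
    using assms by (auto simp: stochastic_matrix_def)
  have "(\<Sum>w\<in>UNIV. P z w * hit_le P y n w) \<le> (\<Sum>w\<in>UNIV. P z w)"
    by (rule sum_mono) (use Suc nonneg in \<open>auto intro: mult_left_le\<close>)
  moreover have "0 \<le> (\<Sum>w\<in>UNIV. P z w * hit_le P y n w)"
    by (rule sum_nonneg) (use Suc nonneg in auto)
  ultimately show ?case using row by auto
qed

lemma hit_le_target [simp]: "hit_le P y n y = 1"
  by (cases n) auto

lemma one_minus_hit_le_Suc:
  assumes "stochastic_matrix P" "z \<noteq> y"
  shows "1 - hit_le P y (Suc n) z = (\<Sum>w\<in>UNIV. P z w * (1 - hit_le P y n w))"
proof -
  have "(\<Sum>w\<in>UNIV. P z w) = 1"
    using assms(1) by (auto simp: stochastic_matrix_def)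
  then show ?thesis
    using assms(2) by (simp add: right_diff_distrib sum_subtractf)
qed

text \<open>The Markov property at time \<open>n\<close>, phrased through first-step analysis.\<close>

lemma one_minus_hit_le_add_le:
  assumes "stochastic_matrix P" and "\<And>w. 1 - hit_le P y m w \<le> c"
  shows "1 - hit_le P y (n + m) z \<le> (1 - hit_le P y n z) * c"
proof (induction n arbitrary: z)
  case 0
  then show ?case using assms(2)[of z] by (cases "z = y") simp_all
next
  case (Suc n)
  show ?case
  proof (cases "z = y")
    case True
    then show ?thesis by simp
  next
    case False
    have nonneg: "\<And>w. 0 \<le> P z w"
      using assms(1) by (auto simp: stochastic_matrix_def)
    have "1 - hit_le P y (Suc n + m) z = (\<Sum>w\<in>UNIV. P z w * (1 - hit_le P y (n + m) w))"
      using one_minus_hit_le_Suc[OF assms(1) False] by simp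
    also have "\<dots> \<le> (\<Sum>w\<in>UNIV. P z w * ((1 - hit_le P y n w) * c))"
      by (rule sum_mono) (use Suc nonneg in \<open>auto intro: mult_left_mono\<close>)
    also have "\<dots> = (1 - hit_le P y (Suc n) z) * c"
      using one_minus_hit_le_Suc[OF assms(1) False]
      by (simp add: sum_distrib_right mult.assoc)
    finally show ?thesis .
  qed
qed

lemma one_minus_hit_le_mult_add_le_power:
  assumes "stochastic_matrix P" and "\<And>w. 1 - hit_le P y T w \<le> c" and "0 \<le> c"
  shows "1 - hit_le P y (k * T + r) z \<le> c ^ k"
proof (induction k)
  case 0
  then show ?case using hit_le_bounds[OF assms(1)] by simp
next
  case (Suc k)
  have "1 - hit_le P y (Suc k * T + r) z = 1 - hit_le P y ((k * T + r) + T) z"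
    by (simp add: algebra_simps)
  also have "\<dots> \<le> (1 - hit_le P y (k * T + r) z) * c"
    by (rule one_minus_hit_le_add_le[OF assms(1,2)])
  also have "\<dots> \<le> c ^ k * c"
    by (rule mult_right_mono) (use Suc assms(3) in auto)
  finally show ?case by (simp add: mult.commute)
qed

lemma sum_le_of_blockwise_geometric:
  fixes q :: "nat \<Rightarrow> real"
  assumes "T > 0" and "\<And>t. 0 \<le> q t" and "\<And>k r. q (k * T + r) \<le> c ^ k"
    and "0 \<le> c" and "c < 1"
  shows "(\<Sum>t<n. q t) \<le> real T / (1 - c)"
proof -
  have "(\<Sum>t<n. q t) \<le> (\<Sum>t<n * T. q t)"
    by (rule sum_mono2) (use assms(1,2) in auto)
  also have "\<dots> = (\<Sum>k<n. \<Sum>t\<in>{k * T..<k * T + T}. q t)"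
    by (rule sum.nat_group[symmetric])
  also have "\<dots> \<le> (\<Sum>k<n. real T * c ^ k)"
  proof (rule sum_mono)
    fix k
    have "(\<Sum>t\<in>{k * T..<k * T + T}. q t) = (\<Sum>r<T. q (k * T + r))"
      by (simp add: sum.atLeastLessThan_shift_0 atLeast0LessThan)
    also have "\<dots> \<le> (\<Sum>r<T. c ^ k)"
      by (rule sum_mono) (rule assms(3))
    finally show "(\<Sum>t\<in>{k * T..<k * T + T}. q t) \<le> real T * c ^ k" by simp
  qed
  also have "\<dots> = real T * ((1 - c ^ n) / (1 - c))"
    using assms(5) by (simp add: sum_distrib_left[symmetric] sum_gp_strict)
  also have "\<dots> \<le> real T / (1 - c)"
    using assms(4,5) by (simp add: divide_right_mono mult_left_le)
  finally show ?thesis .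
qed

lemma exp_hit_le:
  assumes "stochastic_matrix P" and "T > 0"
    and "\<And>w. p \<le> hit_le P y T w" and "p > 0"
  shows "exp_hit P y x \<le> ennreal (real T / p)"
  unfolding exp_hit_def
proof (rule suminf_le_const[OF summableI])
  fix n
  have survival_nonneg: "\<And>t. 0 \<le> 1 - hit_le P y t x"
    using hit_le_bounds[OF assms(1)] by simp
  have "p \<le> 1"
    using assms(3)[of y] by simp
  then have "(\<Sum>t<n. 1 - hit_le P y t x) \<le> real T / (1 - (1 - p))"
    using assms survival_nonneg
    by (intro sum_le_of_blockwise_geometric one_minus_hit_le_mult_add_le_power) auto
  then show "(\<Sum>t<n. ennreal (1 - hit_le P y t x)) \<le> ennreal (real T / p)"
    using survival_nonneg by (simp add: sum_ennreal ennreal_leI)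
qed

lemma ennreal_le_divide_of_le:
  assumes "0 < p" and "0 < a" and "E \<le> ennreal (a / p)"
  shows "ennreal p \<le> ennreal a / E"
proof (cases "E = 0")
  case True
  then show ?thesis using assms(2) by simp
next
  case False
  have finite: "E < top"
    using assms(3) by (simp add: le_less_trans)
  have "ennreal p * E \<le> ennreal p * ennreal (a / p)"
    by (rule mult_left_mono[OF assms(3)]) simp
  also have "\<dots> = ennreal a"
    using assms(1,2) by (simp add: ennreal_mult[symmetric])
  finally show ?thesis
    using divide_less_ennreal[OF False finite] by (simp add: mult.commute not_less[symmetric])
qed

theorem lemma6p6:
  fixes P :: "'a::finite \<Rightarrow> 'a \<Rightarrow> real" and x y :: 'a and T :: nat
  assumes "stochastic_matrix P"
    and "T > 0"
    and "\<forall>x'. hit_le P y T x \<le> hit_le P y T x'"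
  shows "ennreal (hit_le P y T x) \<le> ennreal (real T) / exp_hit P y x"
proof (cases "hit_le P y T x = 0")
  case True
  then show ?thesis by simp
next
  case False
  then have "hit_le P y T x > 0"
    using hit_le_bounds[OF assms(1)] by (simp add: order_less_le)
  moreover have "exp_hit P y x \<le> ennreal (real T / hit_le P y T x)"
    using assms calculation by (intro exp_hit_le) auto
  ultimately show ?thesis
    using assms(2) by (intro ennreal_le_divide_of_le) auto
qed

end
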